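(* Let $X$ be a $T_1$ topological space. An ideal $I$ of $T''(X)$ is a $z$-ideal if and only if for all $f\in T''(X)$ and $g\in I$ with $Z(f)=Z(g)$ we have $f\in I$.
   Context: $C(X)$ is the ring of real-valued continuous functions on $X$; a cozero set is a set $\{x: g(x)\neq 0\}$ with $g\in C(X)$. $T''(X)$ is the ring (under pointwise operations) of all functions $f\colon X\to\mathbb{R}$ for which there is a dense cozero set $U$ of $X$ with $f|_U$ continuous. For any $f\colon X\to\mathbb{R}$, $Z(f)=\{x\in X: f(x)=0\}$. In a commutative ring $R$ with unity, $M(a)$ denotes the intersection of all maximal ideals of $R$ containing $a$, and an ideal $I$ is a $z$-ideal if $M(a)\subseteq I$ for every $a\in I$. *)

theory Defs
  imports "HOL-Analysis.Analysis" "HOL-Algebra.Ideal"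
begin

definition cozero_set :: "('a::topological_space) set \<Rightarrow> bool" where
  "cozero_set U \<longleftrightarrow> (\<exists>g::'a \<Rightarrow> real. continuous_on UNIV g \<and> U = {x. g x \<noteq> 0})"

definition Tpp :: "('a::topological_space \<Rightarrow> real) set" where
  "Tpp = {f. \<exists>U. cozero_set U \<and> closure U = UNIV \<and> continuous_on U f}"

definition Tpp_ring :: "('a::topological_space \<Rightarrow> real) ring" where
  "Tpp_ring = \<lparr>carrier = Tpp, monoid.mult = (\<lambda>f g x. f x * g x), one = (\<lambda>x. 1),
               zero = (\<lambda>x. 0), add = (\<lambda>f g x. f x + g x)\<rparr>"

definition Zset :: "('a \<Rightarrow> real) \<Rightarrow> 'a set" where
  "Zset f = {x. f x = 0}"

definition Mset :: "('b, 'c) ring_scheme \<Rightarrow> 'b \<Rightarrow> 'b set" where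
  "Mset R a = carrier R \<inter> \<Inter>{M. maximalideal M R \<and> a \<in> M}"

definition z_ideal :: "('b, 'c) ring_scheme \<Rightarrow> 'b set \<Rightarrow> bool" where
  "z_ideal R I \<longleftrightarrow> ideal I R \<and> (\<forall>a\<in>I. Mset R a \<subseteq> I)"

end

theory Submission
  imports Defs
begin

text \<open>
  Let \<open>M\<^sub>x\<close> be the ideal of functions vanishing at \<open>x\<close>; it is maximal, so every
  \<open>f \<in> M(g)\<close> vanishes on \<open>Z(g)\<close>. Conversely, let \<open>Z(g) \<subseteq> Z(f)\<close> and let \<open>M\<close> be a maximal
  ideal containing \<open>g\<close> but not \<open>f\<close>. Writing \<open>1 = m + r f\<close> with \<open>m \<in> M\<close>, the element
  \<open>m\<^sup>2 + g\<^sup>2 \<in> M\<close> has no zeros, and a function without zeros is a unit of \<open>T''(X)\<close>,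
  since its reciprocal is continuous wherever it is. Hence \<open>M(g) = {f. Z(g) \<subseteq> Z(f)}\<close>, and the
  theorem follows because \<open>Z(f) = Z(gf)\<close> whenever \<open>Z(g) \<subseteq> Z(f)\<close>.
\<close>

lemma cozero_set_open: "cozero_set U \<Longrightarrow> open U"
  unfolding cozero_set_def
  using open_vimage[OF open_Compl[OF closed_singleton[of 0]]] by (auto simp: vimage_def)

lemma cozero_set_Int:
  assumes "cozero_set U" "cozero_set V"
  shows "cozero_set (U \<inter> V)"
proof -
  obtain g h :: "'a \<Rightarrow> real" where "continuous_on UNIV g" "U = {x. g x \<noteq> 0}"
    and "continuous_on UNIV h" "V = {x. h x \<noteq> 0}"
    using assms unfolding cozero_set_def by blast
  then show ?thesis
    unfolding cozero_set_def by (intro exI[of _ "\<lambda>x. g x * h x"]) (auto intro: continuous_intros)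
qed

lemma Tpp_common_domain:
  assumes "f \<in> Tpp" "g \<in> Tpp"
  obtains U where "cozero_set U" "closure U = UNIV" "continuous_on U f" "continuous_on U g"
proof -
  obtain U V where U: "cozero_set U" "closure U = UNIV" "continuous_on U f"
    and V: "cozero_set V" "closure V = UNIV" "continuous_on V g"
    using assms unfolding Tpp_def by blast
  have "closure (U \<inter> V) = UNIV"
    using closure_open_Int_superset[OF cozero_set_open[OF U(1)]] U(2) V(2) by simp
  moreover have "continuous_on (U \<inter> V) f" "continuous_on (U \<inter> V) g"
    using U(3) V(3) by (auto elim: continuous_on_subset)
  ultimately show thesis
    by (rule that[OF cozero_set_Int[OF U(1) V(1)]])
qed

lemma Tpp_const [simp]: "(\<lambda>x. c) \<in> Tpp"
proof -
  have "cozero_set UNIV"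
    unfolding cozero_set_def by (intro exI[of _ "\<lambda>x. 1"]) auto
  then show ?thesis
    unfolding Tpp_def by (intro CollectI exI[of _ UNIV]) auto
qed

lemma Tpp_add: "f \<in> Tpp \<Longrightarrow> g \<in> Tpp \<Longrightarrow> (\<lambda>x. f x + g x) \<in> Tpp"
  by (erule (1) Tpp_common_domain) (auto simp: Tpp_def intro: continuous_intros)

lemma Tpp_diff: "f \<in> Tpp \<Longrightarrow> g \<in> Tpp \<Longrightarrow> (\<lambda>x. f x - g x) \<in> Tpp"
  by (erule (1) Tpp_common_domain) (auto simp: Tpp_def intro: continuous_intros)

lemma Tpp_mult: "f \<in> Tpp \<Longrightarrow> g \<in> Tpp \<Longrightarrow> (\<lambda>x. f x * g x) \<in> Tpp"
  by (erule (1) Tpp_common_domain) (auto simp: Tpp_def intro: continuous_intros)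

lemma Tpp_uminus: "f \<in> Tpp \<Longrightarrow> (\<lambda>x. - f x) \<in> Tpp"
  by (auto simp: Tpp_def intro: continuous_intros)

lemma Tpp_inverse:
  assumes "f \<in> Tpp" "\<forall>x. f x \<noteq> 0"
  shows "(\<lambda>x. inverse (f x)) \<in> Tpp"
proof -
  obtain U where "cozero_set U" "closure U = UNIV" "continuous_on U f"
    using assms(1) unfolding Tpp_def by blast
  moreover have "continuous_on U (\<lambda>x. inverse (f x))"
    using \<open>continuous_on U f\<close> assms(2) by (intro continuous_on_inverse) auto
  ultimately show ?thesis
    unfolding Tpp_def by blast
qed

lemma Tpp_ring_simps [simp]:
  "carrier Tpp_ring = Tpp"
  "f \<otimes>\<^bsub>Tpp_ring\<^esub> g = (\<lambda>x. f x * g x)"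
  "f \<oplus>\<^bsub>Tpp_ring\<^esub> g = (\<lambda>x. f x + g x)"
  "\<one>\<^bsub>Tpp_ring\<^esub> = (\<lambda>x. 1)"
  "\<zero>\<^bsub>Tpp_ring\<^esub> = (\<lambda>x. 0)"
  by (simp_all add: Tpp_ring_def)

lemma cring_Tpp_ring: "cring Tpp_ring"
proof (rule cringI)
  show "abelian_group Tpp_ring"
  proof (rule abelian_groupI)
    fix f assume "f \<in> carrier Tpp_ring"
    then show "\<exists>g\<in>carrier Tpp_ring. g \<oplus>\<^bsub>Tpp_ring\<^esub> f = \<zero>\<^bsub>Tpp_ring\<^esub>"
      by (intro bexI[of _ "\<lambda>x. - f x"]) (simp_all add: Tpp_uminus)
  qed (simp_all add: Tpp_add algebra_simps)
  show "comm_monoid Tpp_ring"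
    by (rule comm_monoidI) (simp_all add: Tpp_mult algebra_simps)
qed (simp add: distrib_right)

lemma ring_Tpp_ring: "ring Tpp_ring"
  using cring_Tpp_ring by (rule cring.axioms(1))

lemma Tpp_ring_a_inv [simp]: "f \<in> Tpp \<Longrightarrow> \<ominus>\<^bsub>Tpp_ring\<^esub> f = (\<lambda>x. - f x)"
  by (rule abelian_group.minus_equality[OF ring.is_abelian_group[OF ring_Tpp_ring]])
    (simp_all add: Tpp_uminus)

lemma (in cring) maximalideal_add_multiple_eq_one:
  assumes "maximalideal M R" "f \<in> carrier R" "f \<notin> M"
  obtains m r where "m \<in> M" "r \<in> carrier R" "m \<oplus> r \<otimes> f = \<one>"
proof -
  interpret M: maximalideal M R by fact
  let ?J = "M <+>\<^bsub>R\<^esub> PIdl f"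
  have J_iff: "a \<in> ?J \<longleftrightarrow> (\<exists>m\<in>M. \<exists>r\<in>carrier R. a = m \<oplus> r \<otimes> f)" for a
    unfolding set_add_def' cgenideal_def by blast
  have J: "ideal ?J R"
    by (rule add_ideals[OF M.is_ideal cgenideal_ideal[OF assms(2)]])
  have "M \<subseteq> ?J"
  proof
    fix m assume "m \<in> M"
    then have "m = m \<oplus> \<zero> \<otimes> f"
      using assms(2) M.Icarr by simp
    with \<open>m \<in> M\<close> show "m \<in> ?J"
      unfolding J_iff by blast
  qed
  moreover have "f = \<zero> \<oplus> \<one> \<otimes> f"
    using assms(2) by simp
  then have "f \<in> ?J"
    unfolding J_iff using M.additive_subgroup_axioms additive_subgroup.zero_closed by blast
  ultimately have "?J = carrier R"
    using M.I_maximal[OF J] ideal.Icarr[OF J] assms(3) by blast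
  then show thesis
    using J_iff[of \<one>] that by auto
qed

lemma (in ring) maximalidealI_inverse_modulo:
  assumes "ideal M R" "\<one> \<notin> M"
    and inverse: "\<And>h. h \<in> carrier R \<Longrightarrow> h \<notin> M \<Longrightarrow> \<exists>u\<in>carrier R. u \<otimes> h \<ominus> \<one> \<in> M"
  shows "maximalideal M R"
proof (rule maximalidealI[OF assms(1)])
  show "carrier R \<noteq> M"
    using assms(2) by blast
next
  fix J assume J: "ideal J R" "M \<subseteq> J" "J \<subseteq> carrier R"
  interpret J: ideal J R by fact
  show "J = M \<or> J = carrier R"
  proof (cases "J \<subseteq> M")
    case False
    then obtain h where h: "h \<in> J" "h \<notin> M" by blast
    then obtain u where u: "u \<in> carrier R" "u \<otimes> h \<ominus> \<one> \<in> M"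
      using inverse J(3) by blast
    have "u \<otimes> h \<in> J" "u \<otimes> h \<ominus> \<one> \<in> J"
      using J.I_l_closed h(1) u J(2) by auto
    then have "u \<otimes> h \<ominus> (u \<otimes> h \<ominus> \<one>) \<in> J"
      by (simp add: a_minus_def J.a_closed J.a_inv_closed)
    moreover have "u \<otimes> h \<ominus> (u \<otimes> h \<ominus> \<one>) = \<one>"
      using u(1) h(1) J(3) by (simp add: a_minus_def minus_add a_assoc[symmetric] r_neg)
    ultimately show ?thesis
      using J.one_imp_carrier by simp
  qed (use J(2) in blast)
qed

lemma ideal_vanishing_at: "ideal {f \<in> Tpp. f x = 0} Tpp_ring"
proof (rule idealI[OF ring_Tpp_ring])
  show "subgroup {f \<in> Tpp. f x = 0} (add_monoid Tpp_ring)"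
  proof (rule subgroup.intro)
    fix f assume "f \<in> {f \<in> Tpp. f x = 0}"
    then show "inv\<^bsub>add_monoid Tpp_ring\<^esub> f \<in> {f \<in> Tpp. f x = 0}"
      using Tpp_ring_a_inv[of f] Tpp_uminus[of f] unfolding a_inv_def by auto
  qed (auto simp: Tpp_add)
qed (auto simp: Tpp_mult)

lemma maximalideal_vanishing_at: "maximalideal {f \<in> Tpp. f x = 0} Tpp_ring"
proof (rule ring.maximalidealI_inverse_modulo[OF ring_Tpp_ring ideal_vanishing_at])
  fix h assume h: "h \<in> carrier Tpp_ring" "h \<notin> {f \<in> Tpp. f x = 0}"
  let ?u = "\<lambda>y. inverse (h x)"
  have "?u \<otimes>\<^bsub>Tpp_ring\<^esub> h \<ominus>\<^bsub>Tpp_ring\<^esub> \<one>\<^bsub>Tpp_ring\<^esub> = (\<lambda>y. inverse (h x) * h y - 1)"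
    using h(1) by (simp add: a_minus_def Tpp_mult)
  also have "\<dots> \<in> {f \<in> Tpp. f x = 0}"
    using h by (auto intro!: Tpp_diff Tpp_mult)
  finally show "\<exists>u\<in>carrier Tpp_ring. u \<otimes>\<^bsub>Tpp_ring\<^esub> h \<ominus>\<^bsub>Tpp_ring\<^esub> \<one>\<^bsub>Tpp_ring\<^esub> \<in> {f \<in> Tpp. f x = 0}"
    by auto
qed simp

lemma ideal_Tpp_ring_nowhere_zero_eq_carrier:
  assumes "ideal J Tpp_ring" "s \<in> J" "\<forall>x. s x \<noteq> 0"
  shows "J = Tpp"
proof -
  interpret J: ideal J Tpp_ring by fact
  have "(\<lambda>x. inverse (s x)) \<in> Tpp"
    using Tpp_inverse[OF J.Icarr[OF assms(2), simplified] assms(3)] .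
  then have "(\<lambda>x. inverse (s x)) \<otimes>\<^bsub>Tpp_ring\<^esub> s \<in> J"
    using J.I_l_closed assms(2) by simp
  then have "\<one>\<^bsub>Tpp_ring\<^esub> \<in> J"
    using assms(3) by simp
  then show ?thesis
    using J.one_imp_carrier by simp
qed

lemma Zset_subset_if_in_Mset:
  assumes "f \<in> Mset Tpp_ring g" "g \<in> Tpp"
  shows "Zset g \<subseteq> Zset f"
proof
  fix x assume "x \<in> Zset g"
  then have "g \<in> {f \<in> Tpp. f x = 0}"
    using assms(2) by (simp add: Zset_def)
  then have "f \<in> {f \<in> Tpp. f x = 0}"
    using assms(1) maximalideal_vanishing_at unfolding Mset_def by blast
  then show "x \<in> Zset f"
    by (simp add: Zset_def)
qed

lemma in_Mset_if_Zset_subset: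
  assumes "f \<in> Tpp" "Zset g \<subseteq> Zset f"
  shows "f \<in> Mset Tpp_ring g"
  unfolding Mset_def
proof (intro IntI InterI)
  fix M assume "M \<in> {M. maximalideal M Tpp_ring \<and> g \<in> M}"
  then have M: "maximalideal M Tpp_ring" and "g \<in> M" by auto
  interpret M: maximalideal M Tpp_ring by fact
  interpret cring Tpp_ring by (rule cring_Tpp_ring)
  show "f \<in> M"
  proof (rule ccontr)
    assume "f \<notin> M"
    then obtain m r where m: "m \<in> M" and r: "r \<in> Tpp"
      and one: "m \<oplus>\<^bsub>Tpp_ring\<^esub> r \<otimes>\<^bsub>Tpp_ring\<^esub> f = \<one>\<^bsub>Tpp_ring\<^esub>"
      using maximalideal_add_multiple_eq_one[OF M] assms(1) by auto
    let ?s = "m \<otimes>\<^bsub>Tpp_ring\<^esub> m \<oplus>\<^bsub>Tpp_ring\<^esub> g \<otimes>\<^bsub>Tpp_ring\<^esub> g"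
    have "?s \<in> M"
      using m \<open>g \<in> M\<close> M.I_l_closed M.Icarr M.a_closed by blast
    moreover have "?s x \<noteq> 0" for x
    proof
      assume "?s x = 0"
      then have "m x = 0" "g x = 0"
        by (simp_all add: sum_squares_eq_zero_iff)
      then have "m x + r x * f x = 0"
        using assms(2) by (auto simp: Zset_def)
      then show False
        using fun_cong[OF one, of x] by simp
    qed
    ultimately have "M = Tpp"
      using ideal_Tpp_ring_nowhere_zero_eq_carrier[OF M.is_ideal] by blast
    then show False
      using M.I_notcarr by simp
  qed
qed (simp add: assms(1))

lemma Mset_Tpp_ring:
  assumes "g \<in> Tpp"
  shows "Mset Tpp_ring g = {f \<in> Tpp. Zset g \<subseteq> Zset f}"
proof (intro equalityI subsetI)
  fix f assume f: "f \<in> Mset Tpp_ring g"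
  then have "f \<in> Tpp"
    by (simp add: Mset_def)
  then show "f \<in> {f \<in> Tpp. Zset g \<subseteq> Zset f}"
    using Zset_subset_if_in_Mset[OF f assms] by simp
qed (use in_Mset_if_Zset_subset in blast)

theorem theorem5p01:
  fixes I :: "('a::t1_space \<Rightarrow> real) set"
  assumes "ideal I Tpp_ring"
  shows "z_ideal Tpp_ring I \<longleftrightarrow>
           (\<forall>f\<in>Tpp. \<forall>g\<in>I. Zset f = Zset g \<longrightarrow> f \<in> I)"
proof -
  interpret ideal I Tpp_ring by fact
  have "(\<forall>g\<in>I. Mset Tpp_ring g \<subseteq> I) \<longleftrightarrow> (\<forall>f\<in>Tpp. \<forall>g\<in>I. Zset f = Zset g \<longrightarrow> f \<in> I)"
  proof
    assume "\<forall>g\<in>I. Mset Tpp_ring g \<subseteq> I"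
    then show "\<forall>f\<in>Tpp. \<forall>g\<in>I. Zset f = Zset g \<longrightarrow> f \<in> I"
      using Mset_Tpp_ring Icarr by fastforce
  next
    assume saturated: "\<forall>f\<in>Tpp. \<forall>g\<in>I. Zset f = Zset g \<longrightarrow> f \<in> I"
    show "\<forall>g\<in>I. Mset Tpp_ring g \<subseteq> I"
    proof (intro ballI subsetI)
      fix g f assume "g \<in> I" "f \<in> Mset Tpp_ring g"
      then have "f \<in> Tpp" "Zset g \<subseteq> Zset f"
        using Mset_Tpp_ring Icarr by auto
      moreover have "g \<otimes>\<^bsub>Tpp_ring\<^esub> f \<in> I"
        using I_r_closed \<open>g \<in> I\<close> \<open>f \<in> Tpp\<close> by simp
      moreover have "Zset f = Zset (g \<otimes>\<^bsub>Tpp_ring\<^esub> f)"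
        using \<open>Zset g \<subseteq> Zset f\<close> by (auto simp: Zset_def)
      ultimately show "f \<in> I"
        using saturated by blast
    qed
  qed
  then show ?thesis
    unfolding z_ideal_def using assms by blast
qed

end
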